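(* Let $\Phi$ be a channel matrix whose rows $P^1,\dots,P^4\in\Delta^n$ are in general position, let $Q^0$ be the equidistant point from $P^1,\dots,P^4$ with barycentric coordinate $\boldsymbol\lambda^0$, and suppose $\lambda^0_1<0$, $\lambda^0_2<0$, $\lambda^0_3\ge0$, $\lambda^0_4\ge0$. Let $Q^{1(1)}=\pi(Q^0|L(P^2,P^3,P^4))$ and $Q^{1(2)}=\pi(Q^0|L(P^1,P^3,P^4))$ with barycentric coordinates $\boldsymbol\lambda^{1(1)},\boldsymbol\lambda^{1(2)}$ about $P^1,\dots,P^4$, and suppose $\lambda^{1(2)}_1<0$. Suppose further $\lambda^{1(1)}_2\ge0$, $\lambda^{1(1)}_3<0$, $\lambda^{1(1)}_4\ge0$, and let $Q^{2\dagger}=\pi(Q^0|L(P^2,P^4))$. Then the output distribution achieving the channel capacity is $Q^\ast=Q^{2\dagger}$ and the channel capacity is $C=D(P^2\|Q^{2\dagger})$.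
   Context: $\Delta^n=\{Q:Q_j>0,\sum_jQ_j=1\}$, $\bar\Delta^m=\{\boldsymbol\lambda:\lambda_i\ge0,\sum_i\lambda_i=1\}$; $D(Q\|Q')=\sum_jQ_j\log(Q_j/Q'_j)$. Rows are in general position if $P^2-P^1,\dots,P^m-P^1$ are linearly independent. $L(S^1,\dots,S^r)=\{\sum_i\lambda_iS^i:\sum_i\lambda_i=1\}\cap\Delta^n$; for such an affine subspace $L$, $\pi(Q'|L)$ is the unique $Q\in L$ minimizing $D(Q\|Q')$. The barycentric coordinate of $Q\in L(P^1,\dots,P^m)$ is the unique $\boldsymbol\lambda$ with $\sum_i\lambda_i=1$, $Q=\sum_i\lambda_iP^i$. The equidistant point is the unique $Q^0\in L(P^1,\dots,P^m)$ with all $D(P^i\|Q^0)$ equal. Mutual information $I(\boldsymbol\lambda,\Phi)=\sum_{i,j}\lambda_iP^i_j\log(P^i_j/Q_j)$ with $Q=\boldsymbol\lambda\Phi$; capacity $C=\max_{\boldsymbol\lambda\in\bar\Delta^m}I(\boldsymbol\lambda,\Phi)$; the capacity-achieving output distribution is $Q^\ast=\boldsymbol\lambda^\ast\Phi$ for a maximizer $\boldsymbol\lambda^\ast$ (unique). *)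

theory Defs
  imports "HOL-Analysis.Analysis"
begin

text \<open>Probability distributions on a finite output alphabet 'a (of size n) are
functions 'a => real. Channel rows P^1..P^m are P 1, ..., P m (indices are nat).\<close>

definition open_simplex :: "('a::finite \<Rightarrow> real) set" where
  "open_simplex = {Q. (\<forall>j. Q j > 0) \<and> (\<Sum>j\<in>UNIV. Q j) = 1}"

definition closed_simplex :: "nat \<Rightarrow> (nat \<Rightarrow> real) set" where
  "closed_simplex m = {l. (\<forall>i\<in>{1..m}. l i \<ge> 0) \<and> (\<Sum>i\<in>{1..m}. l i) = 1}"

definition KL :: "('a::finite \<Rightarrow> real) \<Rightarrow> ('a \<Rightarrow> real) \<Rightarrow> real" where
  "KL Q Q' = (\<Sum>j\<in>UNIV. Q j * ln (Q j / Q' j))"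

definition general_position :: "(nat \<Rightarrow> 'a::finite \<Rightarrow> real) \<Rightarrow> nat \<Rightarrow> bool" where
  "general_position P m \<longleftrightarrow>
     (\<forall>c::nat \<Rightarrow> real. (\<forall>j. (\<Sum>i\<in>{2..m}. c i * (P i j - P 1 j)) = 0)
        \<longrightarrow> (\<forall>i\<in>{2..m}. c i = 0))"

definition affL :: "(nat \<Rightarrow> 'a::finite \<Rightarrow> real) \<Rightarrow> nat set \<Rightarrow> ('a \<Rightarrow> real) set" where
  "affL P I = {Q. \<exists>l::nat \<Rightarrow> real. (\<Sum>i\<in>I. l i) = 1 \<and> Q = (\<lambda>j. \<Sum>i\<in>I. l i * P i j)}
              \<inter> open_simplex"

definition Iproj :: "('a::finite \<Rightarrow> real) set \<Rightarrow> ('a \<Rightarrow> real) \<Rightarrow> ('a \<Rightarrow> real)" where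
  "Iproj L Q' = (THE Q. Q \<in> L \<and> (\<forall>R\<in>L. KL Q Q' \<le> KL R Q'))"

text \<open>Barycentric coordinate of Q w.r.t. the rows indexed by I (zero outside I, for uniqueness).\<close>
definition bary :: "(nat \<Rightarrow> 'a::finite \<Rightarrow> real) \<Rightarrow> nat set \<Rightarrow> ('a \<Rightarrow> real) \<Rightarrow> (nat \<Rightarrow> real)" where
  "bary P I Q = (THE l. (\<forall>i. i \<notin> I \<longrightarrow> l i = 0) \<and> (\<Sum>i\<in>I. l i) = 1
                       \<and> Q = (\<lambda>j. \<Sum>i\<in>I. l i * P i j))"

definition equidistant :: "(nat \<Rightarrow> 'a::finite \<Rightarrow> real) \<Rightarrow> nat set \<Rightarrow> ('a \<Rightarrow> real)" where
  "equidistant P I = (THE Q. Q \<in> affL P I \<and> (\<forall>i\<in>I. \<forall>k\<in>I. KL (P i) Q = KL (P k) Q))"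

definition out_dist :: "(nat \<Rightarrow> 'a::finite \<Rightarrow> real) \<Rightarrow> nat \<Rightarrow> (nat \<Rightarrow> real) \<Rightarrow> ('a \<Rightarrow> real)" where
  "out_dist P m l = (\<lambda>j. \<Sum>i\<in>{1..m}. l i * P i j)"

definition mutual_info :: "(nat \<Rightarrow> 'a::finite \<Rightarrow> real) \<Rightarrow> nat \<Rightarrow> (nat \<Rightarrow> real) \<Rightarrow> real" where
  "mutual_info P m l = (\<Sum>i\<in>{1..m}. \<Sum>j\<in>UNIV. l i * P i j * ln (P i j / out_dist P m l j))"

definition capacity :: "(nat \<Rightarrow> 'a::finite \<Rightarrow> real) \<Rightarrow> nat \<Rightarrow> real" where
  "capacity P m = (SUP l\<in>closed_simplex m. mutual_info P m l)"

definition cap_output :: "(nat \<Rightarrow> 'a::finite \<Rightarrow> real) \<Rightarrow> nat \<Rightarrow> ('a \<Rightarrow> real)" where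
  "cap_output P m = (THE Q. \<exists>l\<in>closed_simplex m.
       mutual_info P m l = capacity P m \<and> Q = out_dist P m l)"

end

theory Submission
  imports Defs
begin

(*
  Everything rests on the compensation identity: for signed weights nu with sum 1,
    sum_i nu_i D(P^i || R) = sum_i nu_i D(P^i || nu Phi) + D(nu Phi || R).
  Applied to an equidistant point, it says that the barycentric weights of the point average the
  divergences to any R to at least its radius, and that the radius can only shrink when rows are
  dropped.  Q^{2+} is equidistant from P^2 and P^4 with radius c = D(P^2 || Q^{2+}).  The negative
  coordinate lambda^{1(1)}_3 then forces D(P^3 || Q^{2+}) <= c, and lambda^0_1 < 0 together with
  lambda^0_3 >= 0 forces D(P^1 || Q^{2+}) <= c.  As Q^{2+} lies strictly between P^2 and P^4, it
  satisfies the Kuhn-Tucker conditions for capacity.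

  Equidistant points exist because a maximiser of the information over signed weights with
  non-negative output has strictly positive output, and first-order optimality then equalises the
  divergences; the I-projections of Q^0 are equidistant points by the Pythagorean identity.
*)

section \<open>Entropy and divergence\<close>

lemma tendsto_x_ln_x_at_right_0: "((\<lambda>x::real. x * ln x) \<longlongrightarrow> 0) (at_right 0)"
proof -
  have lim: "((\<lambda>x. - (ln (inverse x) / inverse x)) \<longlongrightarrow> - 0) (at_right (0::real))"
    by (intro tendsto_minus filterlim_compose[OF ln_x_over_x_tendsto_0 filterlim_inverse_at_top_right])
  have "\<forall>\<^sub>F x in at_right (0::real). - (ln (inverse x) / inverse x) = x * ln x"
    by (rule eventually_at_rightI[of 0 1]) (auto simp: ln_inverse divide_inverse)
  from tendsto_cong[OF this] lim show ?thesis
    by simp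
qed

lemma continuous_on_x_ln_x: "continuous_on {0..} (\<lambda>x::real. x * ln x)"
proof -
  have "continuous (at x within {0..}) (\<lambda>x::real. x * ln x)" if "x \<ge> 0" for x
  proof (cases "x = 0")
    case True
    have "((\<lambda>x::real. x * ln x) \<longlongrightarrow> 0) (at 0 within {0..})"
      using tendsto_x_ln_x_at_right_0 by (simp add: at_within_Ici_at_right)
    then show ?thesis
      using True by (simp add: continuous_within)
  next
    case False
    with that have "isCont (\<lambda>x::real. x * ln x) x"
      by (intro continuous_intros) auto
    then show ?thesis
      by (rule continuous_at_imp_continuous_within)
  qed
  then show ?thesis
    by (simp add: continuous_on_eq_continuous_within)
qed

lemma diff_le_mult_ln_diff:
  fixes a b :: real
  assumes "a \<ge> 0" "b > 0"
  shows "a - b \<le> a * (ln a - ln b)"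
proof (cases "a = 0")
  case False
  with assms have "ln (b / a) \<le> b / a - 1"
    by (intro ln_le_minus_one) simp
  with assms False show ?thesis
    by (simp add: ln_div field_simps)
qed (use assms in simp)

lemma diff_less_mult_ln_diff:
  fixes a b :: real
  assumes "a > 0" "b > 0" "a \<noteq> b"
  shows "a - b < a * (ln a - ln b)"
proof -
  have "ln (b / a) \<noteq> b / a - 1"
    using assms ln_eq_minus_one[of "b / a"] by auto
  then have "ln (b / a) < b / a - 1"
    using assms ln_le_minus_one[of "b / a"] by simp
  with assms show ?thesis
    by (simp add: ln_div field_simps)
qed

definition neg_entropy :: "('a::finite \<Rightarrow> real) \<Rightarrow> real" where
  "neg_entropy Q = (\<Sum>j\<in>UNIV. Q j * ln (Q j))"

lemma open_simplex_pos: "Q \<in> open_simplex \<Longrightarrow> Q j > 0"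
  unfolding open_simplex_def by auto

lemma open_simplex_sum: "Q \<in> open_simplex \<Longrightarrow> sum Q UNIV = 1"
  unfolding open_simplex_def by auto

lemma sum_one_le_one:
  fixes Q :: "'a::finite \<Rightarrow> real"
  assumes "\<forall>j. Q j \<ge> 0" "sum Q UNIV = 1"
  shows "Q j \<le> 1"
  using member_le_sum[of j UNIV Q] assms by simp

lemma open_simplex_le_1: "Q \<in> open_simplex \<Longrightarrow> Q j \<le> 1"
  by (simp add: less_imp_le open_simplex_pos open_simplex_sum sum_one_le_one)

lemma KL_eq_neg_entropy_minus_cross:
  fixes Q R :: "'a::finite \<Rightarrow> real"
  assumes "\<forall>j. Q j \<ge> 0" "\<forall>j. R j > 0"
  shows "KL Q R = neg_entropy Q - (\<Sum>j\<in>UNIV. Q j * ln (R j))"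
proof -
  have "Q j * ln (Q j / R j) = Q j * ln (Q j) - Q j * ln (R j)" for j
  proof (cases "Q j = 0")
    case False
    with assms have "Q j > 0" "R j > 0" by (auto simp: order_le_less)
    then show ?thesis by (simp add: ln_div algebra_simps)
  qed simp
  then show ?thesis
    unfolding KL_def neg_entropy_def by (simp add: sum_subtractf)
qed

lemma gibbs_inequality:
  fixes Q R :: "'a::finite \<Rightarrow> real"
  assumes "\<forall>j. Q j \<ge> 0" "\<forall>j. R j > 0" "sum Q UNIV = sum R UNIV"
  shows "(\<Sum>j\<in>UNIV. Q j * ln (R j)) \<le> neg_entropy Q"
proof -
  have "(\<Sum>j\<in>UNIV. Q j - R j) \<le> (\<Sum>j\<in>UNIV. Q j * (ln (Q j) - ln (R j)))"
    by (intro sum_mono diff_le_mult_ln_diff) (use assms in auto)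
  with assms(3) show ?thesis
    by (simp add: neg_entropy_def sum_subtractf right_diff_distrib)
qed

lemma KL_self: "KL Q Q = 0"
  unfolding KL_def by (intro sum.neutral) auto

lemma KL_nonneg:
  assumes "Q \<in> open_simplex" "R \<in> open_simplex"
  shows "KL Q R \<ge> 0"
proof -
  have Q: "\<forall>j. Q j \<ge> 0" and R: "\<forall>j. R j > 0"
    using assms by (auto intro: less_imp_le open_simplex_pos)
  moreover have "sum Q UNIV = sum R UNIV"
    using assms by (simp add: open_simplex_sum)
  ultimately have "(\<Sum>j\<in>UNIV. Q j * ln (R j)) \<le> neg_entropy Q"
    by (rule gibbs_inequality)
  then show ?thesis
    using KL_eq_neg_entropy_minus_cross[OF Q R] by simp
qed

lemma KL_eq_0_imp_eq:
  assumes Q: "Q \<in> open_simplex" and R: "R \<in> open_simplex" and "KL Q R = 0"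
  shows "Q = R"
proof (rule ccontr)
  assume "Q \<noteq> R"
  then obtain j0 where "Q j0 \<noteq> R j0" by auto
  have pos: "Q j > 0" "R j > 0" for j
    using Q R by (simp_all add: open_simplex_pos)
  have "(\<Sum>j\<in>UNIV. Q j - R j) < (\<Sum>j\<in>UNIV. Q j * (ln (Q j) - ln (R j)))"
  proof (rule sum_strict_mono_ex1)
    show "\<forall>j\<in>UNIV. Q j - R j \<le> Q j * (ln (Q j) - ln (R j))"
      using diff_le_mult_ln_diff[OF less_imp_le[OF pos(1)] pos(2)] by blast
    show "\<exists>j\<in>UNIV. Q j - R j < Q j * (ln (Q j) - ln (R j))"
      using diff_less_mult_ln_diff[OF pos \<open>Q j0 \<noteq> R j0\<close>] by blast
  qed simp
  moreover have "(\<Sum>j\<in>UNIV. Q j - R j) = 0"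
    using open_simplex_sum[OF Q] open_simplex_sum[OF R] by (simp add: sum_subtractf)
  moreover have "KL Q R = (\<Sum>j\<in>UNIV. Q j * (ln (Q j) - ln (R j)))"
    unfolding KL_def using ln_divide_pos[OF pos] by presburger
  ultimately have "KL Q R > 0"
    by linarith
  with \<open>KL Q R = 0\<close> show False by simp
qed

lemma KL_le_chi_square:
  assumes Q: "Q \<in> open_simplex" and R: "R \<in> open_simplex"
  shows "KL Q R \<le> (\<Sum>j\<in>UNIV. (Q j - R j)\<^sup>2 / R j)"
proof -
  have "Q j * ln (Q j / R j) \<le> (Q j - R j)\<^sup>2 / R j + (Q j - R j)" for j
  proof -
    have pos: "Q j > 0" "R j > 0" using Q R by (simp_all add: open_simplex_pos)
    then have "Q j * ln (Q j / R j) \<le> Q j * (Q j / R j - 1)"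
      by (intro mult_left_mono ln_le_minus_one) auto
    also have "\<dots> = (Q j - R j)\<^sup>2 / R j + (Q j - R j)"
      using pos by (simp add: field_simps power2_eq_square)
    finally show ?thesis .
  qed
  then have "KL Q R \<le> (\<Sum>j\<in>UNIV. (Q j - R j)\<^sup>2 / R j + (Q j - R j))"
    unfolding KL_def by (rule sum_mono)
  also have "\<dots> = (\<Sum>j\<in>UNIV. (Q j - R j)\<^sup>2 / R j) + (\<Sum>j\<in>UNIV. Q j - R j)"
    by (rule sum.distrib)
  also have "(\<Sum>j\<in>UNIV. Q j - R j) = 0"
    using open_simplex_sum[OF Q] open_simplex_sum[OF R] by (simp add: sum_subtractf)
  finally show ?thesis by simp
qed

section \<open>Mixtures of the rows\<close>

definition mixture :: "(nat \<Rightarrow> 'a::finite \<Rightarrow> real) \<Rightarrow> nat set \<Rightarrow> (nat \<Rightarrow> real) \<Rightarrow> 'a \<Rightarrow> real" where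
  "mixture P I \<mu> = (\<lambda>j. \<Sum>i\<in>I. \<mu> i * P i j)"

text \<open>The mutual information \<open>I(\<mu>, \<Phi>)\<close> written through entropies, which makes sense for signed
  weights \<open>\<mu>\<close>.\<close>
definition mixture_info :: "(nat \<Rightarrow> 'a::finite \<Rightarrow> real) \<Rightarrow> nat set \<Rightarrow> (nat \<Rightarrow> real) \<Rightarrow> real" where
  "mixture_info P I \<mu> = (\<Sum>i\<in>I. \<mu> i * neg_entropy (P i)) - neg_entropy (mixture P I \<mu>)"

lemma affL_iff: "Q \<in> affL P I \<longleftrightarrow> (\<exists>\<mu>. (\<Sum>i\<in>I. \<mu> i) = 1 \<and> Q = mixture P I \<mu>) \<and> Q \<in> open_simplex"
  unfolding affL_def mixture_def by auto

lemma mixture_cong: "(\<And>i. i \<in> I \<Longrightarrow> \<mu> i = \<nu> i) \<Longrightarrow> mixture P I \<mu> = mixture P I \<nu>"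
  unfolding mixture_def by (auto intro!: sum.cong)

lemma mixture_info_cong: "(\<And>i. i \<in> I \<Longrightarrow> \<mu> i = \<nu> i) \<Longrightarrow> mixture_info P I \<mu> = mixture_info P I \<nu>"
  unfolding mixture_info_def using mixture_cong[of I \<mu> \<nu> P] by (auto intro!: sum.cong)

lemma mixture_extend:
  assumes "finite I" "J \<subseteq> I"
  shows "mixture P I (\<lambda>i. if i \<in> J then \<mu> i else 0) = mixture P J \<mu>"
  unfolding mixture_def using assms by (auto intro!: sum.mono_neutral_cong_right)

lemma wsum_indicator:
  assumes "finite I" "k \<in> I"
  shows "(\<Sum>i\<in>I. indicator {k} i * x i) = (x k :: real)"
  using assms by (simp add: indicator_def if_distrib sum.delta)

lemma mixture_indicator: "finite I \<Longrightarrow> k \<in> I \<Longrightarrow> mixture P I (indicator {k}) = P k"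
  unfolding mixture_def by (rule ext) (rule wsum_indicator)

lemma mixture_lincomb:
  "mixture P I (\<lambda>i. a * \<mu> i + b * \<nu> i) = (\<lambda>j. a * mixture P I \<mu> j + b * mixture P I \<nu> j)"
  unfolding mixture_def by (simp add: sum.distrib sum_distrib_left distrib_right mult.assoc)

lemma sum_mixture:
  assumes "\<forall>i\<in>I. P i \<in> open_simplex"
  shows "sum (mixture P I \<mu>) UNIV = (\<Sum>i\<in>I. \<mu> i)"
proof -
  have "sum (mixture P I \<mu>) UNIV = (\<Sum>i\<in>I. \<mu> i * sum (P i) UNIV)"
    unfolding mixture_def by (simp add: sum.swap[of _ UNIV] sum_distrib_left)
  also have "\<dots> = (\<Sum>i\<in>I. \<mu> i)"
    using assms by (intro sum.cong) (simp_all add: open_simplex_sum)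
  finally show ?thesis .
qed

lemma weighted_sum_const:
  assumes "(\<Sum>i\<in>I. \<mu> i) = 1" "\<And>i. i \<in> I \<Longrightarrow> f i = (c::real)"
  shows "(\<Sum>i\<in>I. \<mu> i * f i) = c"
  using assms by (simp add: sum_distrib_right[symmetric])

lemma wsum_KL_eq_neg_entropy_minus_cross:
  assumes "\<forall>i\<in>I. P i \<in> open_simplex" "\<forall>j. R j > 0"
  shows "(\<Sum>i\<in>I. \<mu> i * KL (P i) R)
       = (\<Sum>i\<in>I. \<mu> i * neg_entropy (P i)) - (\<Sum>j\<in>UNIV. mixture P I \<mu> j * ln (R j))"
proof -
  have "KL (P i) R = neg_entropy (P i) - (\<Sum>j\<in>UNIV. P i j * ln (R j))" if "i \<in> I" for i
    using assms that by (intro KL_eq_neg_entropy_minus_cross) (auto intro: less_imp_le open_simplex_pos)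
  then have "(\<Sum>i\<in>I. \<mu> i * KL (P i) R)
      = (\<Sum>i\<in>I. \<mu> i * neg_entropy (P i)) - (\<Sum>i\<in>I. \<Sum>j\<in>UNIV. \<mu> i * P i j * ln (R j))"
    by (simp add: right_diff_distrib sum_subtractf sum_distrib_left mult.assoc)
  also have "(\<Sum>i\<in>I. \<Sum>j\<in>UNIV. \<mu> i * P i j * ln (R j)) = (\<Sum>j\<in>UNIV. mixture P I \<mu> j * ln (R j))"
    unfolding mixture_def by (simp add: sum.swap[of _ I] sum_distrib_right)
  finally show ?thesis .
qed

lemma mixture_info_eq_wsum_KL:
  assumes "\<forall>i\<in>I. P i \<in> open_simplex" "\<forall>j. R j > 0" "\<forall>j. mixture P I \<mu> j > 0"
  shows "mixture_info P I \<mu> = (\<Sum>i\<in>I. \<mu> i * KL (P i) R) - KL (mixture P I \<mu>) R"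
  using wsum_KL_eq_neg_entropy_minus_cross[OF assms(1,2)] KL_eq_neg_entropy_minus_cross[of "mixture P I \<mu>" R] assms(2,3)
  unfolding mixture_info_def by (simp add: less_imp_le)

lemma wsum_KL_compensation:
  assumes "\<forall>i\<in>I. P i \<in> open_simplex" "\<forall>j. R j > 0" "\<forall>j. mixture P I \<mu> j > 0"
  shows "(\<Sum>i\<in>I. \<mu> i * KL (P i) R)
       = (\<Sum>i\<in>I. \<mu> i * KL (P i) (mixture P I \<mu>)) + KL (mixture P I \<mu>) R"
  using mixture_info_eq_wsum_KL[OF assms] mixture_info_eq_wsum_KL[OF assms(1,3,3)] KL_self[of "mixture P I \<mu>"]
  by simp

lemma wsum_lincomb:
  "(\<Sum>i\<in>I. (a * \<mu> i + b * \<nu> i) * x i) = a * (\<Sum>i\<in>I. \<mu> i * x i) + b * (\<Sum>i\<in>I. \<nu> i * x i :: real)"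
  by (simp add: distrib_right sum.distrib sum_distrib_left mult.assoc)

lemma wsum_indicator_diff:
  assumes "finite I" "i \<in> I" "k \<in> I"
  shows "(\<Sum>l\<in>I. (indicator {i} l - indicator {k} l) * x l) = x i - (x k :: real)"
  unfolding left_diff_distrib sum_subtractf wsum_indicator[OF assms(1,2)] wsum_indicator[OF assms(1,3)] ..

section \<open>Equidistant points\<close>

definition is_equidistant :: "(nat \<Rightarrow> 'a::finite \<Rightarrow> real) \<Rightarrow> nat set \<Rightarrow> ('a \<Rightarrow> real) \<Rightarrow> bool" where
  "is_equidistant P I Q \<longleftrightarrow> Q \<in> affL P I \<and> (\<forall>i\<in>I. \<forall>k\<in>I. KL (P i) Q = KL (P k) Q)"

lemma is_equidistantD:
  assumes "is_equidistant P I Q"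
  shows is_equidistant_affL: "Q \<in> affL P I"
    and is_equidistant_open_simplex: "Q \<in> open_simplex"
    and is_equidistant_KL_eq: "i \<in> I \<Longrightarrow> k \<in> I \<Longrightarrow> KL (P i) Q = KL (P k) Q"
  using assms unfolding is_equidistant_def affL_iff by blast+

lemma wsum_KL_equidistant:
  assumes rows: "\<forall>i\<in>I. P i \<in> open_simplex" and \<mu>: "(\<Sum>i\<in>I. \<mu> i) = 1"
    and E: "is_equidistant P I (mixture P I \<mu>)" and k: "k \<in> I" and R: "R \<in> open_simplex"
  shows "(\<Sum>i\<in>I. \<mu> i * KL (P i) R) = KL (P k) (mixture P I \<mu>) + KL (mixture P I \<mu>) R"
proof -
  have "(\<Sum>i\<in>I. \<mu> i * KL (P i) R)
      = (\<Sum>i\<in>I. \<mu> i * KL (P i) (mixture P I \<mu>)) + KL (mixture P I \<mu>) R"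
    using R is_equidistant_open_simplex[OF E]
    by (intro wsum_KL_compensation[OF rows, of R \<mu>] allI open_simplex_pos)
  also have "(\<Sum>i\<in>I. \<mu> i * KL (P i) (mixture P I \<mu>)) = KL (P k) (mixture P I \<mu>)"
    by (rule weighted_sum_const[OF \<mu> is_equidistant_KL_eq[OF E _ k]])
  finally show ?thesis .
qed

lemma equidistant_unique:
  assumes rows: "\<forall>i\<in>I. P i \<in> open_simplex"
    and Q: "is_equidistant P I Q" and Q': "is_equidistant P I Q'"
  shows "Q' = Q"
proof -
  obtain \<mu> where \<mu>: "(\<Sum>i\<in>I. \<mu> i) = 1" "Q = mixture P I \<mu>"
    using is_equidistant_affL[OF Q] unfolding affL_iff by blast
  obtain \<mu>' where \<mu>': "(\<Sum>i\<in>I. \<mu>' i) = 1" "Q' = mixture P I \<mu>'"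
    using is_equidistant_affL[OF Q'] unfolding affL_iff by blast
  obtain k where k: "k \<in> I"
    using \<mu>(1) by fastforce
  note Qo = is_equidistant_open_simplex[OF Q] and Q'o = is_equidistant_open_simplex[OF Q']
  have "KL (P k) Q' = KL (P k) Q + KL Q Q'"
    using wsum_KL_equidistant[OF rows \<mu>(1) _ k Q'o] Q
      weighted_sum_const[OF \<mu>(1) is_equidistant_KL_eq[OF Q' _ k]] \<mu>(2) by simp
  moreover have "KL (P k) Q = KL (P k) Q' + KL Q' Q"
    using wsum_KL_equidistant[OF rows \<mu>'(1) _ k Qo] Q'
      weighted_sum_const[OF \<mu>'(1) is_equidistant_KL_eq[OF Q _ k]] \<mu>'(2) by simp
  ultimately have "KL Q' Q = 0"
    using KL_nonneg[OF Qo Q'o] KL_nonneg[OF Q'o Qo] by linarith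
  then show ?thesis
    by (rule KL_eq_0_imp_eq[OF Q'o Qo])
qed

lemma equidistant_eqI:
  assumes "\<forall>i\<in>I. P i \<in> open_simplex" "is_equidistant P I Q"
  shows "equidistant P I = Q"
  unfolding equidistant_def
proof (rule the_equality)
  show "Q \<in> affL P I \<and> (\<forall>i\<in>I. \<forall>k\<in>I. KL (P i) Q = KL (P k) Q)"
    using assms(2) unfolding is_equidistant_def .
next
  fix Q' assume "Q' \<in> affL P I \<and> (\<forall>i\<in>I. \<forall>k\<in>I. KL (P i) Q' = KL (P k) Q')"
  then show "Q' = Q"
    using equidistant_unique[OF assms] unfolding is_equidistant_def by blast
qed

text \<open>Pythagorean identity: on \<open>affL P I\<close> the divergence from \<open>Q0\<close> exceeds the divergence
  from the equidistant point \<open>E\<close> by a constant, so both are minimised at \<open>E\<close>.\<close>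
lemma Iproj_eq_equidistant:
  assumes rows: "\<forall>i\<in>I. P i \<in> open_simplex"
    and Q0: "Q0 \<in> open_simplex" "\<forall>i\<in>I. \<forall>k\<in>I. KL (P i) Q0 = KL (P k) Q0"
    and E: "is_equidistant P I E"
  shows "Iproj (affL P I) Q0 = E"
proof -
  note EL = is_equidistant_affL[OF E] and Eo = is_equidistant_open_simplex[OF E]
  obtain k where k: "k \<in> I"
    using EL unfolding affL_iff by fastforce
  have pythagoras: "KL R Q0 = (KL (P k) Q0 - KL (P k) E) + KL R E" if R: "R \<in> affL P I" for R
  proof -
    obtain \<nu> where \<nu>: "(\<Sum>i\<in>I. \<nu> i) = 1" "R = mixture P I \<nu>" and Ro: "R \<in> open_simplex"
      using R unfolding affL_iff by blast
    have "(\<Sum>i\<in>I. \<nu> i * KL (P i) Q0) = (\<Sum>i\<in>I. \<nu> i * KL (P i) R) + KL R Q0"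
      using Q0(1) Ro unfolding \<nu>(2) by (intro wsum_KL_compensation[OF rows] allI open_simplex_pos)
    moreover have "(\<Sum>i\<in>I. \<nu> i * KL (P i) E) = (\<Sum>i\<in>I. \<nu> i * KL (P i) R) + KL R E"
      using Eo Ro unfolding \<nu>(2) by (intro wsum_KL_compensation[OF rows] allI open_simplex_pos)
    moreover have "(\<Sum>i\<in>I. \<nu> i * KL (P i) Q0) = KL (P k) Q0"
      using Q0(2) k by (intro weighted_sum_const[OF \<nu>(1)]) blast
    moreover have "(\<Sum>i\<in>I. \<nu> i * KL (P i) E) = KL (P k) E"
      by (rule weighted_sum_const[OF \<nu>(1) is_equidistant_KL_eq[OF E _ k]])
    ultimately show ?thesis by linarith
  qed
  have KL_E_nonneg: "KL R E \<ge> 0" if "R \<in> affL P I" for R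
    using that Eo by (intro KL_nonneg) (auto simp: affL_iff)
  show ?thesis
    unfolding Iproj_def
  proof (rule the_equality)
    show "E \<in> affL P I \<and> (\<forall>R\<in>affL P I. KL E Q0 \<le> KL R Q0)"
      using EL pythagoras KL_E_nonneg KL_self[of E] by fastforce
  next
    fix R assume R: "R \<in> affL P I \<and> (\<forall>R'\<in>affL P I. KL R Q0 \<le> KL R' Q0)"
    then have "KL R E \<le> 0"
      using EL pythagoras[of R] pythagoras[of E] KL_self[of E] by fastforce
    then have "KL R E = 0"
      using KL_E_nonneg[of R] R by simp
    then show "R = E"
      using R Eo by (intro KL_eq_0_imp_eq) (auto simp: affL_iff)
  qed
qed

lemma equidistant_radius_mono:
  assumes rows: "\<forall>i\<in>I. P i \<in> open_simplex" and "J \<subseteq> I"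
    and E: "is_equidistant P I E" and F: "is_equidistant P J F"
    and "i \<in> J" "k \<in> I"
  shows "KL (P i) F \<le> KL (P k) E"
proof -
  obtain \<nu> where \<nu>: "(\<Sum>i\<in>J. \<nu> i) = 1" "F = mixture P J \<nu>"
    using is_equidistant_affL[OF F] unfolding affL_iff by blast
  note Eo = is_equidistant_open_simplex[OF E] and Fo = is_equidistant_open_simplex[OF F]
  have "(\<Sum>l\<in>J. \<nu> l * KL (P l) E) = KL (P i) F + KL F E"
    using wsum_KL_equidistant[OF _ \<nu>(1) _ \<open>i \<in> J\<close> Eo] rows F \<nu>(2) \<open>J \<subseteq> I\<close> by blast
  moreover have "(\<Sum>l\<in>J. \<nu> l * KL (P l) E) = KL (P k) E"
    using is_equidistant_KL_eq[OF E _ \<open>k \<in> I\<close>] \<open>J \<subseteq> I\<close>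
    by (intro weighted_sum_const[OF \<nu>(1)]) blast
  ultimately show ?thesis
    using KL_nonneg[OF Fo Eo] by linarith
qed

text \<open>Against any \<open>R\<close>, the weights of an equidistant point average the divergences to at least
  its radius; a negative weight therefore forces the corresponding divergence down.\<close>
lemma KL_le_of_negative_weight:
  assumes rows: "\<forall>i\<in>I. P i \<in> open_simplex" and "finite I" and \<mu>: "(\<Sum>i\<in>I. \<mu> i) = 1"
    and E: "is_equidistant P I (mixture P I \<mu>)" and R: "R \<in> open_simplex"
    and k: "k \<in> I" "\<mu> k < 0" and radius: "c \<le> KL (P k) (mixture P I \<mu>)"
    and others: "\<forall>i\<in>I - {k}. \<mu> i * (KL (P i) R - c) \<le> 0"
  shows "KL (P k) R \<le> c"
proof -
  have "c \<le> (\<Sum>i\<in>I. \<mu> i * KL (P i) R)"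
    using wsum_KL_equidistant[OF rows \<mu> E k(1) R] radius
      KL_nonneg[OF is_equidistant_open_simplex[OF E] R] by linarith
  also have "(\<Sum>i\<in>I. \<mu> i * KL (P i) R) = (\<Sum>i\<in>I. \<mu> i * (KL (P i) R - c)) + c"
    using \<mu> by (simp add: right_diff_distrib sum_subtractf sum_distrib_right[symmetric])
  also have "(\<Sum>i\<in>I. \<mu> i * (KL (P i) R - c))
      = \<mu> k * (KL (P k) R - c) + (\<Sum>i\<in>I - {k}. \<mu> i * (KL (P i) R - c))"
    using \<open>finite I\<close> k(1) by (rule sum.remove)
  also have "(\<Sum>i\<in>I - {k}. \<mu> i * (KL (P i) R - c)) \<le> 0"
    using others by (intro sum_nonpos) blast
  finally have "0 \<le> \<mu> k * (KL (P k) R - c)"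
    by simp
  with k(2) show ?thesis
    by (simp add: zero_le_mult_iff)
qed

lemma KL_diff_along_line_antimono:
  fixes P P' :: "'a::finite \<Rightarrow> real"
  defines "Q t \<equiv> \<lambda>j. t * P j + (1 - t) * P' j"
  assumes P: "P \<in> open_simplex" and P': "P' \<in> open_simplex"
    and pos: "\<forall>j. Q a j > 0" "\<forall>j. Q b j > 0" and "a \<le> b"
  shows "KL P (Q b) - KL P' (Q b) \<le> KL P (Q a) - KL P' (Q a)"
proof -
  have diff: "KL P (Q t) - KL P' (Q t)
      = neg_entropy P - neg_entropy P' - (\<Sum>j\<in>UNIV. (P j - P' j) * ln (Q t j))"
    if "\<forall>j. Q t j > 0" for t
    using KL_eq_neg_entropy_minus_cross[of P "Q t"] KL_eq_neg_entropy_minus_cross[of P' "Q t"] that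
      P P' by (simp add: less_imp_le open_simplex_pos left_diff_distrib sum_subtractf)
  have step: "Q b j - Q a j = (b - a) * (P j - P' j)" for j
    unfolding Q_def by (simp add: algebra_simps)
  have "(P j - P' j) * ln (Q a j) \<le> (P j - P' j) * ln (Q b j)" for j
  proof (cases "P j \<le> P' j")
    case True
    then have "(b - a) * (P j - P' j) \<le> 0"
      using \<open>a \<le> b\<close> by (simp add: mult_nonneg_nonpos)
    then have "Q b j \<le> Q a j"
      using step[of j] by linarith
    with True pos show ?thesis
      by (intro mult_left_mono_neg) simp_all
  next
    case False
    then have "(b - a) * (P j - P' j) \<ge> 0"
      using \<open>a \<le> b\<close> by simp
    then have "Q a j \<le> Q b j"
      using step[of j] by linarith
    with False pos show ?thesis
      by (intro mult_left_mono) simp_all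
  qed
  then have "(\<Sum>j\<in>UNIV. (P j - P' j) * ln (Q a j)) \<le> (\<Sum>j\<in>UNIV. (P j - P' j) * ln (Q b j))"
    by (rule sum_mono)
  then show ?thesis
    using diff[OF pos(1)] diff[OF pos(2)] by linarith
qed

lemma KL_pos: "Q \<in> open_simplex \<Longrightarrow> R \<in> open_simplex \<Longrightarrow> Q \<noteq> R \<Longrightarrow> KL Q R > 0"
  using KL_nonneg[of Q R] KL_eq_0_imp_eq[of Q R] by fastforce

lemma equidistant_pair_weight_bounds:
  fixes P P' :: "'a::finite \<Rightarrow> real"
  defines "Q t \<equiv> \<lambda>j. t * P j + (1 - t) * P' j"
  assumes P: "P \<in> open_simplex" and P': "P' \<in> open_simplex" and "P \<noteq> P'"
    and pos: "\<forall>j. Q a j > 0" and eq: "KL P (Q a) = KL P' (Q a)"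
  shows "0 < a \<and> a < 1"
proof -
  have Q0: "Q 0 = P'" and Q1: "Q 1 = P"
    unfolding Q_def by simp_all
  have P'pos: "\<forall>j. Q 0 j > 0" and Ppos: "\<forall>j. Q 1 j > 0"
    unfolding Q0 Q1 using P P' by (simp_all add: open_simplex_pos)
  show ?thesis
  proof
    show "0 < a"
    proof (rule ccontr)
      assume "\<not> 0 < a"
      then have "KL P (Q 0) - KL P' (Q 0) \<le> KL P (Q a) - KL P' (Q a)"
        using KL_diff_along_line_antimono[OF P P', where a = a and b = 0] pos P'pos
        unfolding Q_def by simp
      then show False
        using eq KL_pos[OF P P' \<open>P \<noteq> P'\<close>] KL_self[of P'] unfolding Q0 by simp
    qed
    show "a < 1"
    proof (rule ccontr)
      assume "\<not> a < 1"
      then have "KL P (Q a) - KL P' (Q a) \<le> KL P (Q 1) - KL P' (Q 1)"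
        using KL_diff_along_line_antimono[OF P P', where a = 1 and b = a] pos Ppos
        unfolding Q_def by simp
      then show False
        using eq KL_pos[OF P' P] \<open>P \<noteq> P'\<close> KL_self[of P] unfolding Q1 by simp
    qed
  qed
qed

lemma equidistant_pair_weights_pos:
  assumes rows: "P i \<in> open_simplex" "P k \<in> open_simplex" and "P i \<noteq> P k"
    and \<mu>: "\<mu> i + \<mu> k = 1" and E: "is_equidistant P {i, k} (mixture P {i, k} \<mu>)"
  shows "\<mu> i > 0" "\<mu> k > 0"
proof -
  have "i \<noteq> k"
    using \<open>P i \<noteq> P k\<close> by blast
  moreover have "\<mu> k = 1 - \<mu> i"
    using \<mu> by simp
  ultimately have mix: "mixture P {i, k} \<mu> = (\<lambda>j. \<mu> i * P i j + (1 - \<mu> i) * P k j)"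
    unfolding mixture_def by simp
  have "\<forall>j. mixture P {i, k} \<mu> j > 0"
    using is_equidistant_open_simplex[OF E] open_simplex_pos by blast
  then have "0 < \<mu> i \<and> \<mu> i < 1"
    using is_equidistant_KL_eq[OF E, of i k] unfolding mix
    by (intro equidistant_pair_weight_bounds[OF rows \<open>P i \<noteq> P k\<close>]) auto
  with \<mu> show "\<mu> i > 0" "\<mu> k > 0"
    by auto
qed

section \<open>Existence of equidistant points\<close>

definition info_maximiser :: "(nat \<Rightarrow> 'a::finite \<Rightarrow> real) \<Rightarrow> nat set \<Rightarrow> (nat \<Rightarrow> real) \<Rightarrow> bool" where
  "info_maximiser P I \<mu> \<longleftrightarrow> (\<Sum>i\<in>I. \<mu> i) = 1 \<and> (\<forall>j. mixture P I \<mu> j \<ge> 0) \<and>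
     (\<forall>\<nu>. (\<Sum>i\<in>I. \<nu> i) = 1 \<and> (\<forall>j. mixture P I \<nu> j \<ge> 0)
        \<longrightarrow> mixture_info P I \<nu> \<le> mixture_info P I \<mu>)"

lemma continuous_on_mixture:
  assumes "\<And>i. i \<in> I \<Longrightarrow> continuous_on UNIV (\<lambda>v. m v i)"
  shows "continuous_on UNIV (\<lambda>v. mixture P I (m v) j)"
  unfolding mixture_def using assms by (intro continuous_on_sum continuous_on_mult_right)

lemma continuous_on_mixture_info:
  assumes cont: "\<And>i. i \<in> I \<Longrightarrow> continuous_on UNIV (\<lambda>v. m v i)"
  shows "continuous_on {v. \<forall>j. mixture P I (m v) j \<ge> 0} (\<lambda>v. mixture_info P I (m v))"
proof -
  have "continuous_on {v. \<forall>j. mixture P I (m v) j \<ge> 0} (\<lambda>v. mixture P I (m v) j * ln (mixture P I (m v) j))"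
    for j
    by (rule continuous_on_compose2[OF continuous_on_x_ln_x
          continuous_on_subset[OF continuous_on_mixture[OF cont]]]) auto
  moreover have "continuous_on {v. \<forall>j. mixture P I (m v) j \<ge> 0} (\<lambda>v. m v i * neg_entropy (P i))"
    if "i \<in> I" for i
    using that by (intro continuous_on_mult_right continuous_on_subset[OF cont]) auto
  ultimately show ?thesis
    unfolding mixture_info_def neg_entropy_def by (intro continuous_on_diff continuous_on_sum)
qed

text \<open>Weight functions \<open>nat \<Rightarrow> real\<close> carry no useful topology, so the compactness argument runs in
  a Euclidean parameter space mapped continuously onto the weights.\<close>
lemma info_maximiser_exists:
  fixes m :: "'v::euclidean_space \<Rightarrow> nat \<Rightarrow> real"
  assumes rows: "\<forall>i\<in>I. P i \<in> open_simplex" and "finite I" "k \<in> I"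
    and S: "closed S" and cont: "\<And>i. i \<in> I \<Longrightarrow> continuous_on UNIV (\<lambda>v. m v i)"
    and onto: "\<And>\<mu>. (\<Sum>i\<in>I. \<mu> i) = 1 \<Longrightarrow> \<exists>v\<in>S. \<forall>i\<in>I. m v i = \<mu> i"
    and sum_m: "\<And>v. v \<in> S \<Longrightarrow> (\<Sum>i\<in>I. m v i) = 1"
    and bounded: "bounded {v\<in>S. \<forall>j. mixture P I (m v) j \<ge> 0}"
  shows "\<exists>\<mu>. info_maximiser P I \<mu>"
proof -
  define K where "K = {v\<in>S. \<forall>j. mixture P I (m v) j \<ge> 0}"
  have "closed K"
    unfolding K_def Collect_conj_eq Collect_mem_eq
    by (intro closed_Int S closed_Collect_all closed_Collect_le continuous_on_const continuous_on_mixture cont)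
  with bounded have "compact K"
    unfolding K_def by (simp add: compact_eq_bounded_closed)
  have "(\<Sum>i\<in>I. indicator {k} i) = (1::real)"
    using wsum_indicator[OF \<open>finite I\<close> \<open>k \<in> I\<close>, of "\<lambda>_. 1"] by simp
  then obtain v0 where v0: "v0 \<in> S" "\<forall>i\<in>I. m v0 i = indicator {k} i"
    using onto by blast
  have "mixture P I (m v0) = mixture P I (indicator {k})"
    using v0(2) by (intro mixture_cong) blast
  also have "\<dots> = P k"
    by (rule mixture_indicator[OF \<open>finite I\<close> \<open>k \<in> I\<close>])
  finally have "mixture P I (m v0) = P k" .
  then have "v0 \<in> K"
    unfolding K_def using v0(1) rows \<open>k \<in> I\<close> by (auto intro: less_imp_le open_simplex_pos)
  have "continuous_on K (\<lambda>v. mixture_info P I (m v))"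
    unfolding K_def by (rule continuous_on_subset[OF continuous_on_mixture_info[OF cont]]) auto
  then obtain vs where vs: "vs \<in> K" "\<forall>v\<in>K. mixture_info P I (m v) \<le> mixture_info P I (m vs)"
    using continuous_attains_sup[OF \<open>compact K\<close>] \<open>v0 \<in> K\<close> by blast
  have "info_maximiser P I (m vs)"
    unfolding info_maximiser_def
  proof (intro conjI allI impI)
    show "(\<Sum>i\<in>I. m vs i) = 1" "mixture P I (m vs) j \<ge> 0" for j
      using vs(1) sum_m unfolding K_def by auto
    fix \<nu> assume \<nu>: "(\<Sum>i\<in>I. \<nu> i) = 1 \<and> (\<forall>j. mixture P I \<nu> j \<ge> 0)"
    obtain v where v: "v \<in> S" "\<forall>i\<in>I. m v i = \<nu> i"
      using onto[OF conjunct1[OF \<nu>]] ..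
    have "mixture P I (m v) = mixture P I \<nu>"
      using v(2) by (intro mixture_cong) blast
    with v(1) \<nu> have "v \<in> K"
      unfolding K_def by simp
    moreover have "mixture_info P I (m v) = mixture_info P I \<nu>"
      using v(2) by (intro mixture_info_cong) blast
    ultimately show "mixture_info P I \<nu> \<le> mixture_info P I (m vs)"
      using vs(2) by fastforce
  qed
  then show ?thesis
    by blast
qed

lemma neg_entropy_push_le:
  fixes Q R :: "'a::finite \<Rightarrow> real"
  assumes Q: "\<forall>j. Q j \<ge> 0" "sum Q UNIV = 1" and R: "R \<in> open_simplex" and "Q j0 = 0"
    and t: "0 < t" "t < 1"
  shows "neg_entropy (\<lambda>j. (1 - t) * Q j + t * R j) \<le> (1 - t) * neg_entropy Q + t * R j0 * ln t"
proof -
  define Qt where "Qt j = (1 - t) * Q j + t * R j" for j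
  have Qt_pos: "Qt j > 0" for j
    unfolding Qt_def using Q(1) t open_simplex_pos[OF R] by (smt (verit) mult_nonneg_nonneg mult_pos_pos)
  have "sum Qt UNIV = 1"
    unfolding Qt_def using Q(2) open_simplex_sum[OF R] by (simp add: sum.distrib sum_distrib_left[symmetric])
  then have Qt_le: "Qt j \<le> 1" for j
    using Qt_pos by (intro sum_one_le_one) (auto intro: less_imp_le)
  have split: "neg_entropy Qt = (1 - t) * (\<Sum>j\<in>UNIV. Q j * ln (Qt j)) + t * (\<Sum>j\<in>UNIV. R j * ln (Qt j))"
    unfolding neg_entropy_def Qt_def by (simp add: distrib_right sum.distrib sum_distrib_left mult.assoc)
  have "(\<Sum>j\<in>UNIV. Q j * ln (Qt j)) \<le> neg_entropy Q"
    using Q Qt_pos \<open>sum Qt UNIV = 1\<close> by (intro gibbs_inequality) auto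
  then have "(1 - t) * (\<Sum>j\<in>UNIV. Q j * ln (Qt j)) \<le> (1 - t) * neg_entropy Q"
    using t by (intro mult_left_mono) auto
  moreover have "(\<Sum>j\<in>UNIV. R j * ln (Qt j)) \<le> R j0 * ln t"
  proof -
    have "(\<Sum>j\<in>UNIV. R j * ln (Qt j)) = R j0 * ln (Qt j0) + (\<Sum>j\<in>UNIV - {j0}. R j * ln (Qt j))"
      by (simp add: sum.remove)
    also have "(\<Sum>j\<in>UNIV - {j0}. R j * ln (Qt j)) \<le> 0"
      using Qt_pos Qt_le open_simplex_pos[OF R] by (intro sum_nonpos mult_nonneg_nonpos) (auto intro: less_imp_le)
    also have "R j0 * ln (Qt j0) \<le> R j0 * ln t"
    proof -
      have "Qt j0 = t * R j0"
        unfolding Qt_def using \<open>Q j0 = 0\<close> by simp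
      then have "Qt j0 \<le> t"
        using t open_simplex_le_1[OF R, of j0] by (simp add: mult_left_le)
      then show ?thesis
        using Qt_pos[of j0] open_simplex_pos[OF R, of j0] by (intro mult_left_mono) auto
    qed
    finally show ?thesis by simp
  qed
  then have "t * (\<Sum>j\<in>UNIV. R j * ln (Qt j)) \<le> t * R j0 * ln t"
    using t by (simp add: mult.assoc mult_left_mono)
  ultimately show ?thesis
    using split unfolding Qt_def[abs_def] by linarith
qed

lemma mixture_info_push_ge:
  assumes rows: "\<forall>i\<in>I. P i \<in> open_simplex" and "finite I" "k \<in> I"
    and \<mu>: "(\<Sum>i\<in>I. \<mu> i) = 1" "\<forall>j. mixture P I \<mu> j \<ge> 0" "mixture P I \<mu> j0 = 0"
    and t: "0 < t" "t < 1"
  shows "mixture_info P I (\<lambda>i. (1 - t) * \<mu> i + t * indicator {k} i)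
      \<ge> (1 - t) * mixture_info P I \<mu> + t * neg_entropy (P k) - t * P k j0 * ln t"
proof -
  have "sum (mixture P I \<mu>) UNIV = 1"
    using sum_mixture[OF rows] \<mu>(1) by simp
  moreover have "P k \<in> open_simplex"
    using rows \<open>k \<in> I\<close> by blast
  ultimately have "neg_entropy (mixture P I (\<lambda>i. (1 - t) * \<mu> i + t * indicator {k} i))
      \<le> (1 - t) * neg_entropy (mixture P I \<mu>) + t * P k j0 * ln t"
    unfolding mixture_lincomb mixture_indicator[OF \<open>finite I\<close> \<open>k \<in> I\<close>]
    using neg_entropy_push_le[OF \<mu>(2)] \<mu>(3) t by blast
  moreover have "(\<Sum>i\<in>I. ((1 - t) * \<mu> i + t * indicator {k} i) * neg_entropy (P i))
      = (1 - t) * (\<Sum>i\<in>I. \<mu> i * neg_entropy (P i)) + t * neg_entropy (P k)"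
    unfolding wsum_lincomb wsum_indicator[OF \<open>finite I\<close> \<open>k \<in> I\<close>] ..
  ultimately show ?thesis
    unfolding mixture_info_def by (simp add: algebra_simps)
qed

text \<open>If the mixture of a maximiser vanished at \<open>j\<close>, moving a small mass \<open>t\<close> onto a row
  \<open>P k\<close> would gain \<open>-t P k j ln t\<close>, which beats the linear loss \<open>O(t)\<close>.\<close>
lemma info_maximiser_pos:
  assumes rows: "\<forall>i\<in>I. P i \<in> open_simplex" and "finite I" "k \<in> I"
    and max: "info_maximiser P I \<mu>"
  shows "mixture P I \<mu> j > 0"
proof (rule ccontr)
  have \<mu>: "(\<Sum>i\<in>I. \<mu> i) = 1" and nonneg: "\<forall>j. mixture P I \<mu> j \<ge> 0"
    using max unfolding info_maximiser_def by blast+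
  assume "\<not> mixture P I \<mu> j > 0"
  moreover have "mixture P I \<mu> j \<ge> 0"
    using nonneg by blast
  ultimately have "mixture P I \<mu> j = 0"
    by linarith
  define p where "p = P k j"
  have p: "p > 0"
    unfolding p_def using rows \<open>k \<in> I\<close> open_simplex_pos by blast
  define M where "M = mixture_info P I \<mu> - neg_entropy (P k)"
  define t where "t = exp (- (\<bar>M\<bar> + 1) / p)"
  have t: "0 < t" "t < 1"
    unfolding t_def using p by (auto simp: divide_neg_pos)
  have "t * p * ln t = - t * (\<bar>M\<bar> + 1)"
    unfolding t_def using p by (simp add: field_simps)
  define \<mu>t where "\<mu>t i = (1 - t) * \<mu> i + t * indicator {k} i" for i
  have "(\<Sum>i\<in>I. indicator {k} i) = (1::real)"
    using wsum_indicator[OF \<open>finite I\<close> \<open>k \<in> I\<close>, of "\<lambda>_. 1"] by simp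
  then have "(\<Sum>i\<in>I. \<mu>t i) = 1"
    using \<mu> unfolding \<mu>t_def by (simp add: sum.distrib sum_distrib_left[symmetric])
  moreover have "\<forall>j. mixture P I \<mu>t j \<ge> 0"
  proof
    fix j'
    have "0 \<le> (1 - t) * mixture P I \<mu> j'"
      using nonneg t by simp
    moreover have "0 \<le> t * P k j'"
      using t rows \<open>k \<in> I\<close> open_simplex_pos[of "P k" j'] by simp
    ultimately show "mixture P I \<mu>t j' \<ge> 0"
      unfolding \<mu>t_def mixture_lincomb mixture_indicator[OF \<open>finite I\<close> \<open>k \<in> I\<close>] by simp
  qed
  ultimately have "mixture_info P I \<mu>t \<le> mixture_info P I \<mu>"
    using max unfolding info_maximiser_def by blast
  moreover have "mixture_info P I \<mu>t \<ge> (1 - t) * mixture_info P I \<mu> + t * neg_entropy (P k) - t * p * ln t"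
    unfolding \<mu>t_def p_def
    using mixture_info_push_ge[OF rows \<open>finite I\<close> \<open>k \<in> I\<close> \<mu> nonneg \<open>mixture P I \<mu> j = 0\<close> t] .
  ultimately have "t * (\<bar>M\<bar> + 1 - M) \<le> 0"
    using \<open>t * p * ln t = - t * (\<bar>M\<bar> + 1)\<close> unfolding M_def by (simp add: algebra_simps)
  moreover have "t * (\<bar>M\<bar> + 1 - M) > 0"
    using t by simp
  ultimately show False
    by simp
qed

lemma mixture_info_shift_eq:
  fixes \<mu> :: "nat \<Rightarrow> real" and s :: real and i k :: nat
  defines "\<mu>' \<equiv> \<lambda>l. \<mu> l + s * (indicator {i} l - indicator {k} l)"
  assumes rows: "\<forall>i\<in>I. P i \<in> open_simplex" and "finite I" and ik: "i \<in> I" "k \<in> I"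
    and pos: "\<forall>j. mixture P I \<mu> j > 0" "\<forall>j. mixture P I \<mu>' j > 0"
  shows "mixture_info P I \<mu>' = mixture_info P I \<mu>
      + s * (KL (P i) (mixture P I \<mu>) - KL (P k) (mixture P I \<mu>)) - KL (mixture P I \<mu>') (mixture P I \<mu>)"
proof -
  have "mixture_info P I \<mu>' = (\<Sum>l\<in>I. \<mu>' l * KL (P l) (mixture P I \<mu>)) - KL (mixture P I \<mu>') (mixture P I \<mu>)"
    by (rule mixture_info_eq_wsum_KL[OF rows pos(1) pos(2)])
  moreover have "mixture_info P I \<mu> = (\<Sum>l\<in>I. \<mu> l * KL (P l) (mixture P I \<mu>))"
    using mixture_info_eq_wsum_KL[OF rows pos(1) pos(1)] KL_self by simp
  moreover have "(\<Sum>l\<in>I. \<mu>' l * KL (P l) (mixture P I \<mu>)) = (\<Sum>l\<in>I. \<mu> l * KL (P l) (mixture P I \<mu>))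
      + s * (KL (P i) (mixture P I \<mu>) - KL (P k) (mixture P I \<mu>))"
    using wsum_lincomb[of 1 \<mu>] wsum_indicator_diff[OF \<open>finite I\<close> ik] unfolding \<mu>'_def by simp
  ultimately show ?thesis
    by simp
qed

text \<open>After shifting mass \<open>s\<close> from \<open>P k\<close> to \<open>P i\<close>, the loss term \<open>D(Q'\<parallel>Q)\<close> is a chi-square
  divergence of order \<open>s\<^sup>2\<close>, so by maximality \<open>D(P i\<parallel>Q) - D(P k\<parallel>Q)\<close> is at most of order \<open>s\<close>.\<close>
lemma info_maximiser_KL_diff_le:
  assumes rows: "\<forall>i\<in>I. P i \<in> open_simplex" and "finite I" and ik: "i \<in> I" "k \<in> I"
    and max: "info_maximiser P I \<mu>" and s: "0 < s" "\<forall>j. s < mixture P I \<mu> j"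
  shows "KL (P i) (mixture P I \<mu>) - KL (P k) (mixture P I \<mu>)
      \<le> s * (\<Sum>j\<in>UNIV. (P i j - P k j)\<^sup>2 / mixture P I \<mu> j)"
proof -
  define Qs where "Qs = mixture P I \<mu>"
  have \<mu>: "(\<Sum>i\<in>I. \<mu> i) = 1"
    using max unfolding info_maximiser_def by blast
  have pos: "\<forall>j. Qs j > 0"
  proof
    fix j
    show "Qs j > 0"
      using s(1) spec[OF s(2), of j] unfolding Qs_def by linarith
  qed
  have Qs: "Qs \<in> open_simplex"
    unfolding open_simplex_def using pos sum_mixture[OF rows] \<mu> by (simp add: Qs_def)
  define \<mu>' where "\<mu>' l = \<mu> l + s * (indicator {i} l - indicator {k} l)" for l
  define Q' where "Q' = mixture P I \<mu>'"
  have Q'_eq: "Q' j = Qs j + s * (P i j - P k j)" for j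
    using wsum_lincomb[of 1 \<mu>] wsum_indicator_diff[OF \<open>finite I\<close> ik]
    unfolding Q'_def \<mu>'_def Qs_def mixture_def by simp
  have Q'_pos: "Q' j > 0" for j
  proof -
    have "P i j - P k j \<ge> -1"
      using open_simplex_pos[of "P i" j] open_simplex_le_1[of "P k" j] rows ik by force
    then have "s * (-1) \<le> s * (P i j - P k j)"
      using s by (intro mult_left_mono) auto
    moreover have "s < Qs j"
      using s(2) unfolding Qs_def by blast
    ultimately show ?thesis
      using Q'_eq[of j] by linarith
  qed
  have "(\<Sum>l\<in>I. \<mu>' l) = 1"
    using wsum_indicator_diff[OF \<open>finite I\<close> ik, of "\<lambda>_. 1"] \<mu>
    unfolding \<mu>'_def by (simp add: sum.distrib sum_distrib_left[symmetric])
  moreover have "\<forall>j. mixture P I \<mu>' j \<ge> 0"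
    using Q'_pos unfolding Q'_def by (simp add: less_imp_le)
  ultimately have "mixture_info P I \<mu>' \<le> mixture_info P I \<mu>"
    using max unfolding info_maximiser_def by blast
  moreover have "KL Q' Qs \<le> s\<^sup>2 * (\<Sum>j\<in>UNIV. (P i j - P k j)\<^sup>2 / Qs j)"
  proof -
    have "Q' \<in> open_simplex"
      unfolding open_simplex_def using Q'_pos sum_mixture[OF rows] \<open>(\<Sum>l\<in>I. \<mu>' l) = 1\<close>
      by (simp add: Q'_def)
    then have "KL Q' Qs \<le> (\<Sum>j\<in>UNIV. (Q' j - Qs j)\<^sup>2 / Qs j)"
      by (rule KL_le_chi_square[OF _ Qs])
    also have "\<dots> = s\<^sup>2 * (\<Sum>j\<in>UNIV. (P i j - P k j)\<^sup>2 / Qs j)"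
      unfolding Q'_eq by (simp add: sum_distrib_left power_mult_distrib)
    finally show ?thesis .
  qed
  ultimately have "s * (KL (P i) Qs - KL (P k) Qs) \<le> s * (s * (\<Sum>j\<in>UNIV. (P i j - P k j)\<^sup>2 / Qs j))"
    using mixture_info_shift_eq[OF rows \<open>finite I\<close> ik, of \<mu> s] pos Q'_pos
    unfolding Qs_def Q'_def \<mu>'_def by (simp add: power2_eq_square)
  with s show ?thesis
    unfolding Qs_def by simp
qed

lemma info_maximiser_KL_le:
  assumes rows: "\<forall>i\<in>I. P i \<in> open_simplex" and "finite I" and ik: "i \<in> I" "k \<in> I"
    and max: "info_maximiser P I \<mu>" and pos: "\<forall>j. mixture P I \<mu> j > 0"
  shows "KL (P i) (mixture P I \<mu>) \<le> KL (P k) (mixture P I \<mu>)"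
proof -
  define d where "d = KL (P i) (mixture P I \<mu>) - KL (P k) (mixture P I \<mu>)"
  define C where "C = (\<Sum>j\<in>UNIV. (P i j - P k j)\<^sup>2 / mixture P I \<mu> j)"
  define \<delta> where "\<delta> = Min (range (mixture P I \<mu>))"
  have \<delta>: "\<delta> > 0" "\<And>j. \<delta> \<le> mixture P I \<mu> j"
    unfolding \<delta>_def using pos by auto
  have "d \<le> s * C" if s: "0 < s" "s < \<delta>" for s
  proof -
    have "\<forall>j. s < mixture P I \<mu> j"
      using s(2) \<delta>(2) by (metis order_less_le_trans)
    then show ?thesis
      unfolding d_def C_def by (rule info_maximiser_KL_diff_le[OF rows \<open>finite I\<close> ik max s(1)])
  qed
  then have "\<forall>\<^sub>F s in at_right 0. d \<le> s * C"
    using \<delta>(1) by (auto simp: eventually_at_right_field)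
  moreover have "((\<lambda>s. s * C) \<longlongrightarrow> 0) (at_right 0)"
    by (auto intro!: tendsto_eq_intros)
  ultimately have "d \<le> 0"
    by (intro tendsto_lowerbound[of _ _ "at_right 0"]) (auto simp: trivial_limit_at_right_real)
  then show ?thesis
    unfolding d_def by simp
qed

lemma info_maximiser_equidistant:
  assumes rows: "\<forall>i\<in>I. P i \<in> open_simplex" and "finite I" "k \<in> I"
    and max: "info_maximiser P I \<mu>"
  shows "is_equidistant P I (mixture P I \<mu>)"
proof -
  have \<mu>: "(\<Sum>i\<in>I. \<mu> i) = 1"
    using max unfolding info_maximiser_def by blast
  have pos: "\<forall>j. mixture P I \<mu> j > 0"
    using info_maximiser_pos[OF rows \<open>finite I\<close> \<open>k \<in> I\<close> max] by blast
  then have "mixture P I \<mu> \<in> affL P I"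
    unfolding affL_iff open_simplex_def using \<mu> sum_mixture[OF rows] by auto
  moreover have "KL (P i) (mixture P I \<mu>) = KL (P i') (mixture P I \<mu>)" if "i \<in> I" "i' \<in> I" for i i'
    using info_maximiser_KL_le[OF rows \<open>finite I\<close> _ _ max pos] that by (meson order_antisym)
  ultimately show ?thesis
    unfolding is_equidistant_def by blast
qed

lemma bounded_of_injective_linear:
  fixes L :: "'v::euclidean_space \<Rightarrow> 'a::finite \<Rightarrow> real"
  assumes add: "\<And>u w j. L (u + w) j = L u j + L w j"
    and scale: "\<And>r u j. L (r *\<^sub>R u) j = r * L u j"
    and ker: "\<And>v. (\<forall>j. L v j = 0) \<Longrightarrow> v = 0"
  shows "bounded {v. \<forall>j. \<bar>L v j\<bar> \<le> C}"
proof -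
  define f :: "'v \<Rightarrow> real^'a" where "f v = (\<chi> j. L v j)" for v
  have "linear f"
    by (rule linearI) (simp_all add: f_def vec_eq_iff add scale)
  moreover have "inj f"
  proof (rule injI)
    fix u w assume "f u = f w"
    then have "\<forall>j. L (u - w) j = 0"
      using add[of "u - w" w] by (simp add: f_def vec_eq_iff)
    then show "u = w"
      using ker[of "u - w"] by simp
  qed
  ultimately obtain B where B: "B > 0" "\<And>x. B * norm x \<le> norm (f x)"
    using linear_inj_bounded_below_pos by blast
  show ?thesis
    unfolding bounded_iff
  proof (intro exI ballI)
    fix v assume v: "v \<in> {v. \<forall>j. \<bar>L v j\<bar> \<le> C}"
    have "B * norm v \<le> norm (f v)"
      by (rule B(2))
    also have "\<dots> \<le> (\<Sum>j\<in>UNIV. \<bar>f v $ j\<bar>)"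
      by (rule norm_le_l1_cart)
    also have "\<dots> \<le> (\<Sum>j\<in>(UNIV::'a set). C)"
      using v by (intro sum_mono) (simp add: f_def)
    finally show "norm v \<le> CARD('a) * C / B"
      using B(1) by (simp add: field_simps)
  qed
qed

lemma general_position_independent:
  assumes rows: "\<forall>i\<in>{1..m}. P i \<in> open_simplex" and gp: "general_position P m"
    and dep: "\<forall>j. (\<Sum>i\<in>{1..m}. c i * P i j) = 0" and "i \<in> {1..m}"
  shows "c i = 0"
proof -
  have "1 \<le> m"
    using \<open>i \<in> {1..m}\<close> by simp
  have sum_c: "(\<Sum>i\<in>{1..m}. c i) = 0"
    using sum_mixture[OF rows, of c] dep unfolding mixture_def by simp
  have split: "(\<Sum>i\<in>{1..m}. f i) = f 1 + (\<Sum>i\<in>{2..m}. f i)" for f :: "nat \<Rightarrow> real"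
    using sum.atLeast_Suc_atMost[OF \<open>1 \<le> m\<close>, of f] by (simp add: numeral_2_eq_2)
  have "(\<Sum>i\<in>{2..m}. c i * (P i j - P 1 j))
      = (\<Sum>i\<in>{1..m}. c i * P i j) - (\<Sum>i\<in>{1..m}. c i) * P 1 j" for j
    unfolding split by (simp add: right_diff_distrib sum_subtractf sum_distrib_right[symmetric] algebra_simps)
  then have rest: "\<forall>i\<in>{2..m}. c i = 0"
    using gp dep sum_c unfolding general_position_def by simp
  moreover have "c 1 = 0"
    using sum_c rest unfolding split by simp
  ultimately show ?thesis
    using \<open>i \<in> {1..m}\<close> by (cases "i = 1") auto
qed

definition weights4 :: "real \<times> real \<times> real \<times> real \<Rightarrow> nat \<Rightarrow> real" where
  "weights4 v i = (if i = 1 then fst v else if i = 2 then fst (snd v)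
     else if i = 3 then fst (snd (snd v)) else if i = 4 then snd (snd (snd v)) else 0)"

lemma continuous_on_weights4: "continuous_on UNIV (\<lambda>v. weights4 v i)"
proof -
  consider "i = 1" | "i = 2" | "i = 3" | "i = 4" | "i \<notin> {1, 2, 3, 4}"
    by blast
  then show ?thesis
    by cases (simp_all add: weights4_def continuous_on_fst continuous_on_snd continuous_on_id)
qed

lemma weights4_add: "weights4 (u + w) i = weights4 u i + weights4 w i"
  by (simp add: weights4_def)

lemma weights4_scaleR: "weights4 (r *\<^sub>R u) i = r * weights4 u i"
  by (simp add: weights4_def)

lemma weights4_eq_0:
  assumes "\<forall>i\<in>{1..4}. weights4 v i = 0"
  shows "v = 0"
proof -
  have "weights4 v 1 = 0" "weights4 v 2 = 0" "weights4 v 3 = 0" "weights4 v 4 = 0"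
    using assms by simp_all
  then show ?thesis
    by (simp add: weights4_def prod_eq_iff)
qed

definition affine_weights4 :: "nat set \<Rightarrow> (real \<times> real \<times> real \<times> real) set" where
  "affine_weights4 I = {v. (\<Sum>i\<in>I. weights4 v i) = 1} \<inter> (\<Inter>i\<in>{1..4} - I. {v. weights4 v i = 0})"

lemma closed_affine_weights4: "closed (affine_weights4 I)"
  unfolding affine_weights4_def
  by (intro closed_Int closed_INT ballI closed_Collect_eq continuous_on_sum continuous_on_weights4
      continuous_on_const)

lemma affine_weights4_onto:
  assumes "I \<subseteq> {1..4}" "(\<Sum>i\<in>I. \<mu> i) = 1"
  shows "\<exists>v\<in>affine_weights4 I. \<forall>i\<in>I. weights4 v i = \<mu> i"
proof
  define \<mu>' where "\<mu>' i = (if i \<in> I then \<mu> i else 0)" for i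
  define v where "v = (\<mu>' 1, \<mu>' 2, \<mu>' 3, \<mu>' 4)"
  have v: "weights4 v i = \<mu>' i" if "i \<in> {1..4}" for i
    using that unfolding v_def weights4_def by (auto simp: atLeastAtMost_iff numeral_eq_Suc le_Suc_eq)
  show on_I: "\<forall>i\<in>I. weights4 v i = \<mu> i"
    using v assms(1) unfolding \<mu>'_def by auto
  have "(\<Sum>i\<in>I. weights4 v i) = 1"
    using on_I assms(2) by simp
  moreover have "weights4 v i = 0" if "i \<in> {1..4} - I" for i
    using v[of i] that unfolding \<mu>'_def by simp
  ultimately show "v \<in> affine_weights4 I"
    unfolding affine_weights4_def by blast
qed

lemma bounded_affine_weights4:
  fixes P :: "nat \<Rightarrow> 'a::finite \<Rightarrow> real"
  assumes rows: "\<forall>i\<in>{1..4}. P i \<in> open_simplex" and gp: "general_position P 4" and I: "I \<subseteq> {1..4}"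
  shows "bounded {v\<in>affine_weights4 I. \<forall>j. mixture P I (weights4 v) j \<ge> 0}"
proof (rule bounded_subset)
  show "bounded {v. \<forall>j. \<bar>mixture P {1..4} (weights4 v) j\<bar> \<le> 1}"
  proof (rule bounded_of_injective_linear)
    show "mixture P {1..4} (weights4 (u + w)) j = mixture P {1..4} (weights4 u) j + mixture P {1..4} (weights4 w) j"
      for u w j by (simp add: mixture_def weights4_add sum.distrib distrib_right)
    show "mixture P {1..4} (weights4 (r *\<^sub>R u)) j = r * mixture P {1..4} (weights4 u) j"
      for r u j by (simp add: mixture_def weights4_scaleR sum_distrib_left mult.assoc)
    show "v = 0" if "\<forall>j. mixture P {1..4} (weights4 v) j = 0" for v
      using general_position_independent[OF rows gp] that
      unfolding mixture_def by (intro weights4_eq_0) blast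
  qed
  show "{v\<in>affine_weights4 I. \<forall>j. mixture P I (weights4 v) j \<ge> 0}
      \<subseteq> {v. \<forall>j. \<bar>mixture P {1..4} (weights4 v) j\<bar> \<le> 1}"
  proof safe
    fix v j assume v: "v \<in> affine_weights4 I" "\<forall>j. mixture P I (weights4 v) j \<ge> 0"
    have rows_I: "\<forall>i\<in>I. P i \<in> open_simplex"
      using rows I by blast
    have "sum (mixture P I (weights4 v)) UNIV = 1"
      using sum_mixture[OF rows_I, of "weights4 v"] v(1) unfolding affine_weights4_def by simp
    then have "mixture P I (weights4 v) j \<le> 1"
      using v(2) by (intro sum_one_le_one) auto
    moreover have "mixture P I (weights4 v) j \<ge> 0"
      using v(2) by blast
    moreover have "mixture P I (weights4 v) = mixture P {1..4} (weights4 v)"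
      using v(1) I unfolding affine_weights4_def mixture_def by (intro sum.mono_neutral_left ext) auto
    ultimately show "\<bar>mixture P {1..4} (weights4 v) j\<bar> \<le> 1"
      by simp
  qed
qed

lemma equidistant_exists_four:
  fixes P :: "nat \<Rightarrow> 'a::finite \<Rightarrow> real"
  assumes rows: "\<forall>i\<in>{1..4}. P i \<in> open_simplex" and gp: "general_position P 4"
    and I: "I \<subseteq> {1..4}" "k \<in> I"
  shows "\<exists>\<mu>. (\<Sum>i\<in>I. \<mu> i) = 1 \<and> is_equidistant P I (mixture P I \<mu>)"
proof -
  have "finite I"
    using I(1) by (rule finite_subset) simp
  have rows_I: "\<forall>i\<in>I. P i \<in> open_simplex"
    using rows I(1) by blast
  have "(\<Sum>i\<in>I. weights4 v i) = 1" if "v \<in> affine_weights4 I" for v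
    using that unfolding affine_weights4_def by blast
  then obtain \<mu> where "info_maximiser P I \<mu>"
    using info_maximiser_exists[where m = weights4, OF rows_I \<open>finite I\<close> I(2) closed_affine_weights4
        continuous_on_weights4 affine_weights4_onto[OF I(1)] _ bounded_affine_weights4[OF rows gp I(1)]]
    by blast
  then show ?thesis
    using info_maximiser_equidistant[OF rows_I \<open>finite I\<close> I(2)]
    unfolding info_maximiser_def by blast
qed

section \<open>Barycentric coordinates and capacity\<close>

lemma bary_mixture:
  assumes rows: "\<forall>i\<in>{1..m}. P i \<in> open_simplex" and gp: "general_position P m"
    and J: "J \<subseteq> {1..m}" and \<mu>: "(\<Sum>i\<in>J. \<mu> i) = 1" and "i \<in> J"
  shows "bary P {1..m} (mixture P J \<mu>) i = \<mu> i"
proof -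
  define \<beta> where "\<beta> i = (if i \<in> J then \<mu> i else 0)" for i
  have \<beta>_out: "\<forall>i. i \<notin> {1..m} \<longrightarrow> \<beta> i = 0"
    using J unfolding \<beta>_def by auto
  have \<beta>_sum: "(\<Sum>i\<in>{1..m}. \<beta> i) = 1"
    unfolding \<beta>_def using \<mu> sum.inter_restrict[of "{1..m}" \<mu> J] J by (simp add: Int_absorb1)
  have \<beta>_mix: "mixture P {1..m} \<beta> = mixture P J \<mu>"
    unfolding \<beta>_def using J by (simp add: mixture_extend)
  have "bary P {1..m} (mixture P J \<mu>) = \<beta>"
    unfolding bary_def
  proof (rule the_equality)
    show "(\<forall>i. i \<notin> {1..m} \<longrightarrow> \<beta> i = 0) \<and> (\<Sum>i\<in>{1..m}. \<beta> i) = 1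
        \<and> mixture P J \<mu> = (\<lambda>j. \<Sum>i\<in>{1..m}. \<beta> i * P i j)"
      using \<beta>_out \<beta>_sum \<beta>_mix unfolding mixture_def by simp
  next
    fix l assume l: "(\<forall>i. i \<notin> {1..m} \<longrightarrow> l i = 0) \<and> (\<Sum>i\<in>{1..m}. l i) = 1
        \<and> mixture P J \<mu> = (\<lambda>j. \<Sum>i\<in>{1..m}. l i * P i j)"
    then have "\<forall>j. (\<Sum>i\<in>{1..m}. (l i - \<beta> i) * P i j) = 0"
      using \<beta>_mix unfolding mixture_def fun_eq_iff by (simp add: left_diff_distrib sum_subtractf)
    then have "l i - \<beta> i = 0" if "i \<in> {1..m}" for i
      by (rule general_position_independent[OF rows gp _ that])
    then show "l = \<beta>"
      using l \<beta>_out by (metis eq_iff_diff_eq_0 ext)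
  qed
  then show ?thesis
    unfolding \<beta>_def using \<open>i \<in> J\<close> by simp
qed

lemma general_position_rows_distinct:
  assumes rows: "\<forall>i\<in>{1..m}. P i \<in> open_simplex" and gp: "general_position P m"
    and "i \<in> {1..m}" "k \<in> {1..m}" "i \<noteq> k"
  shows "P i \<noteq> P k"
proof
  assume "P i = P k"
  then have "\<forall>j. (\<Sum>l\<in>{1..m}. (indicator {i} l - indicator {k} l) * P l j) = 0"
    using wsum_indicator_diff[OF _ assms(3,4)] by simp
  then have "indicator {i} i - indicator {k} i = (0::real)"
    by (rule general_position_independent[OF rows gp _ assms(3)])
  with \<open>i \<noteq> k\<close> show False
    by simp
qed

lemma out_dist_eq_mixture: "out_dist P m l = mixture P {1..m} l"
  unfolding out_dist_def mixture_def ..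

lemma mutual_info_eq_wsum_KL:
  "mutual_info P m l = (\<Sum>i\<in>{1..m}. l i * KL (P i) (out_dist P m l))"
  unfolding mutual_info_def KL_def by (simp add: sum_distrib_left mult.assoc)

lemma out_dist_open_simplex:
  assumes rows: "\<forall>i\<in>{1..m}. P i \<in> open_simplex" and l: "l \<in> closed_simplex m"
  shows "out_dist P m l \<in> open_simplex"
proof -
  have l_nonneg: "\<And>i. i \<in> {1..m} \<Longrightarrow> l i \<ge> 0" and l_sum: "(\<Sum>i\<in>{1..m}. l i) = 1"
    using l unfolding closed_simplex_def by auto
  then obtain k where k: "k \<in> {1..m}" "l k > 0"
    by (metis (no_types, lifting) order_le_less sum.neutral zero_neq_one)
  have "out_dist P m l j > 0" for j
  proof -
    have P_pos: "P i j > 0" if "i \<in> {1..m}" for i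
      using rows that open_simplex_pos by blast
    show ?thesis
      unfolding out_dist_def
      using mult_pos_pos[OF k(2) P_pos[OF k(1)]] mult_nonneg_nonneg[OF l_nonneg less_imp_le[OF P_pos]]
      by (intro sum_pos2[OF _ k(1)]) auto
  qed
  moreover have "sum (out_dist P m l) UNIV = 1"
    unfolding out_dist_eq_mixture using sum_mixture[OF rows] l_sum by simp
  ultimately show ?thesis
    unfolding open_simplex_def by blast
qed

lemma mutual_info_plus_KL_le:
  assumes rows: "\<forall>i\<in>{1..m}. P i \<in> open_simplex" and \<nu>: "\<nu> \<in> closed_simplex m"
    and Q: "Q \<in> open_simplex" and le: "\<And>i. i \<in> {1..m} \<Longrightarrow> KL (P i) Q \<le> c"
  shows "mutual_info P m \<nu> + KL (out_dist P m \<nu>) Q \<le> c"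
proof -
  have "mutual_info P m \<nu> + KL (out_dist P m \<nu>) Q = (\<Sum>i\<in>{1..m}. \<nu> i * KL (P i) Q)"
    unfolding mutual_info_eq_wsum_KL out_dist_eq_mixture
    using out_dist_open_simplex[OF rows \<nu>] Q
    by (intro wsum_KL_compensation[OF rows, symmetric] allI open_simplex_pos)
      (simp_all add: out_dist_eq_mixture)
  also have "\<dots> \<le> (\<Sum>i\<in>{1..m}. \<nu> i * c)"
    using \<nu> le unfolding closed_simplex_def by (intro sum_mono mult_left_mono) auto
  also have "\<dots> = c"
    using \<nu> unfolding closed_simplex_def by (simp add: sum_distrib_right[symmetric])
  finally show ?thesis .
qed

text \<open>The Kuhn--Tucker conditions for capacity.  The optimal output is unique because of the
  divergence term in the bound above.\<close>
lemma capacity_eqI: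
  assumes rows: "\<forall>i\<in>{1..m}. P i \<in> open_simplex" and l: "l \<in> closed_simplex m"
    and le: "\<And>i. i \<in> {1..m} \<Longrightarrow> KL (P i) (out_dist P m l) \<le> c"
    and eq: "\<And>i. i \<in> {1..m} \<Longrightarrow> l i \<noteq> 0 \<Longrightarrow> KL (P i) (out_dist P m l) = c"
  shows "capacity P m = c \<and> cap_output P m = out_dist P m l"
proof -
  define Q where "Q = out_dist P m l"
  have Q: "Q \<in> open_simplex"
    unfolding Q_def by (rule out_dist_open_simplex[OF rows l])
  note bound = mutual_info_plus_KL_le[OF rows _ Q le[unfolded Q_def[symmetric]]]
  have "mutual_info P m l = (\<Sum>i\<in>{1..m}. l i * c)"
    unfolding mutual_info_eq_wsum_KL using eq by (intro sum.cong) auto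
  then have info_l: "mutual_info P m l = c"
    using l unfolding closed_simplex_def by (simp add: sum_distrib_right[symmetric])
  have KL_nonneg_out: "KL (out_dist P m \<nu>) Q \<ge> 0" if "\<nu> \<in> closed_simplex m" for \<nu>
    by (rule KL_nonneg[OF out_dist_open_simplex[OF rows that] Q])
  have cap: "capacity P m = c"
    unfolding capacity_def
  proof (rule cSup_eq_maximum)
    show "c \<in> mutual_info P m ` closed_simplex m"
      using l info_l by (metis image_eqI)
    show "x \<le> c" if "x \<in> mutual_info P m ` closed_simplex m" for x
      using that bound KL_nonneg_out by fastforce
  qed
  have "cap_output P m = Q"
    unfolding cap_output_def
  proof (rule the_equality)
    show "\<exists>l'\<in>closed_simplex m. mutual_info P m l' = capacity P m \<and> Q = out_dist P m l'"
      using l info_l cap unfolding Q_def by (intro bexI[of _ l]) simp_all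
  next
    fix Q' assume "\<exists>l'\<in>closed_simplex m. mutual_info P m l' = capacity P m \<and> Q' = out_dist P m l'"
    then obtain \<nu> where \<nu>: "\<nu> \<in> closed_simplex m" "mutual_info P m \<nu> = c" "Q' = out_dist P m \<nu>"
      using cap by blast
    then have "KL (out_dist P m \<nu>) Q = 0"
      using bound[OF \<nu>(1)] KL_nonneg_out[OF \<nu>(1)] by simp
    then show "Q' = Q"
      using KL_eq_0_imp_eq[OF out_dist_open_simplex[OF rows \<nu>(1)] Q] \<nu>(3) by simp
  qed
  with cap show ?thesis
    unfolding Q_def by simp
qed

lemma capacity_at_equidistant:
  assumes rows: "\<forall>i\<in>{1..m}. P i \<in> open_simplex" and J: "J \<subseteq> {1..m}" "k \<in> J"
    and \<mu>: "(\<Sum>i\<in>J. \<mu> i) = 1" "\<forall>i\<in>J. \<mu> i \<ge> 0"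
    and E: "is_equidistant P J (mixture P J \<mu>)"
    and within: "\<forall>i\<in>{1..m}. KL (P i) (mixture P J \<mu>) \<le> KL (P k) (mixture P J \<mu>)"
  shows "capacity P m = KL (P k) (mixture P J \<mu>) \<and> cap_output P m = mixture P J \<mu>"
proof -
  define l where "l i = (if i \<in> J then \<mu> i else 0)" for i
  have out: "out_dist P m l = mixture P J \<mu>"
    unfolding out_dist_eq_mixture l_def using J(1) by (simp add: mixture_extend)
  have "l \<in> closed_simplex m"
    unfolding closed_simplex_def l_def
    using \<mu> J(1) sum.inter_restrict[of "{1..m}" \<mu> J] by (auto simp: Int_absorb1)
  moreover have "KL (P i) (out_dist P m l) = KL (P k) (mixture P J \<mu>)" if "l i \<noteq> 0" for i
    using that is_equidistant_KL_eq[OF E _ J(2)] unfolding out l_def by (simp split: if_splits)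
  ultimately show ?thesis
    using capacity_eqI[OF rows, of l] within unfolding out by blast
qed

lemma edge_point_dominates:
  fixes P :: "nat \<Rightarrow> 'a::finite \<Rightarrow> real"
  assumes rows: "\<forall>i\<in>{1..4}. P i \<in> open_simplex"
    and \<mu>0: "(\<Sum>i\<in>{1..4}. \<mu>0 i) = 1" "is_equidistant P {1..4} (mixture P {1..4} \<mu>0)"
      "\<mu>0 1 < 0" "\<mu>0 3 \<ge> 0"
    and \<mu>1: "(\<Sum>i\<in>{2,3,4}. \<mu>1 i) = 1" "is_equidistant P {2,3,4} (mixture P {2,3,4} \<mu>1)"
      "\<mu>1 3 < 0"
    and E: "is_equidistant P {2,4} E"
  shows "\<forall>i\<in>{1..4}. KL (P i) E \<le> KL (P 2) E"
proof -
  define c where "c = KL (P 2) E"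
  note Eo = is_equidistant_open_simplex[OF E]
  have c4: "KL (P 4) E = c"
    using is_equidistant_KL_eq[OF E, of 4 2] unfolding c_def by simp
  have u3: "KL (P 3) E \<le> c"
  proof (rule KL_le_of_negative_weight[OF _ _ \<mu>1(1,2) Eo _ \<mu>1(3)])
    show "c \<le> KL (P 3) (mixture P {2, 3, 4} \<mu>1)"
      unfolding c_def using rows by (intro equidistant_radius_mono[OF _ _ \<mu>1(2) E]) auto
    show "\<forall>i\<in>{2, 3, 4} - {3}. \<mu>1 i * (KL (P i) E - c) \<le> 0"
      using c4 unfolding c_def by auto
  qed (use rows in auto)
  have u1: "KL (P 1) E \<le> c"
  proof (rule KL_le_of_negative_weight[OF _ _ \<mu>0(1,2) Eo _ \<mu>0(3)])
    show "c \<le> KL (P 1) (mixture P {1..4} \<mu>0)"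
      unfolding c_def using rows by (intro equidistant_radius_mono[OF _ _ \<mu>0(2) E]) auto
    have "{1..4::nat} - {1} = {2, 3, 4}"
      by auto
    then show "\<forall>i\<in>{1..4} - {1}. \<mu>0 i * (KL (P i) E - c) \<le> 0"
      using c4 u3 \<mu>0(4) unfolding c_def by (auto simp: mult_nonneg_nonpos)
  qed (use rows in auto)
  have "{1..4::nat} = {1, 2, 3, 4}"
    by auto
  with u1 u3 c4 show ?thesis
    unfolding c_def by auto
qed

theorem theorem22:
  fixes P :: "nat \<Rightarrow> 'a::finite \<Rightarrow> real"
  defines "Q0 \<equiv> equidistant P {1..4}"
      and "Q11 \<equiv> Iproj (affL P {2,3,4}) (equidistant P {1..4})"
      and "Q12 \<equiv> Iproj (affL P {1,3,4}) (equidistant P {1..4})"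
      and "Q2d \<equiv> Iproj (affL P {2,4}) (equidistant P {1..4})"
  assumes rows: "\<forall>i\<in>{1..4}. P i \<in> open_simplex"
      and gp: "general_position P 4"
      and l0: "bary P {1..4} Q0 1 < 0" "bary P {1..4} Q0 2 < 0"
              "bary P {1..4} Q0 3 \<ge> 0" "bary P {1..4} Q0 4 \<ge> 0"
      and l12: "bary P {1..4} Q12 1 < 0"
      and l11: "bary P {1..4} Q11 2 \<ge> 0" "bary P {1..4} Q11 3 < 0"
               "bary P {1..4} Q11 4 \<ge> 0"
  shows "cap_output P 4 = Q2d \<and> capacity P 4 = KL (P 2) Q2d"
proof -
  have rows234: "\<forall>i\<in>{2,3,4}. P i \<in> open_simplex" and rows24: "\<forall>i\<in>{2,4}. P i \<in> open_simplex"
    using rows by simp_all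
  obtain \<mu>0 where \<mu>0: "(\<Sum>i\<in>{1..4}. \<mu>0 i) = 1" "is_equidistant P {1..4} (mixture P {1..4} \<mu>0)"
    using equidistant_exists_four[OF rows gp order_refl, of 1] by auto
  obtain \<mu>1 where \<mu>1: "(\<Sum>i\<in>{2,3,4}. \<mu>1 i) = 1" "is_equidistant P {2,3,4} (mixture P {2,3,4} \<mu>1)"
    using equidistant_exists_four[OF rows gp, of "{2,3,4}" 2] by auto
  obtain \<mu>2 where \<mu>2: "(\<Sum>i\<in>{2,4}. \<mu>2 i) = 1" "is_equidistant P {2,4} (mixture P {2,4} \<mu>2)"
    using equidistant_exists_four[OF rows gp, of "{2,4}" 2] by auto
  have Q0: "Q0 = mixture P {1..4} \<mu>0"
    unfolding Q0_def by (rule equidistant_eqI[OF rows \<mu>0(2)])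
  have "\<forall>i\<in>{1,2,3,4}. \<forall>k\<in>{1,2,3,4}. KL (P i) Q0 = KL (P k) Q0"
    using \<mu>0(2) unfolding Q0 is_equidistant_def atLeastAtMost_iff by auto
  then have Q11: "Q11 = mixture P {2,3,4} \<mu>1" and Q2d: "Q2d = mixture P {2,4} \<mu>2"
    unfolding Q11_def Q2d_def Q0_def[symmetric] using is_equidistant_open_simplex[OF \<mu>0(2)] Q0
    by (auto intro!: Iproj_eq_equidistant[OF rows234 _ _ \<mu>1(2)] Iproj_eq_equidistant[OF rows24 _ _ \<mu>2(2)])
  have "\<mu>0 1 < 0" "\<mu>0 3 \<ge> 0" "\<mu>1 3 < 0"
    using l0(1,3) l11(2) bary_mixture[OF rows gp order_refl \<mu>0(1)] bary_mixture[OF rows gp _ \<mu>1(1)]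
    unfolding Q0 Q11 by auto
  then have "\<forall>i\<in>{1..4}. KL (P i) (mixture P {2,4} \<mu>2) \<le> KL (P 2) (mixture P {2,4} \<mu>2)"
    by (intro edge_point_dominates[OF rows \<mu>0(1,2) _ _ \<mu>1(1,2) _ \<mu>2(2)])
  moreover have "\<mu>2 2 > 0" "\<mu>2 4 > 0"
    using \<mu>2 rows general_position_rows_distinct[OF rows gp, of 2 4]
    by (intro equidistant_pair_weights_pos; simp)+
  ultimately show ?thesis
    using capacity_at_equidistant[OF rows _ _ \<mu>2(1) _ \<mu>2(2)] unfolding Q2d by auto
qed

end
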